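(* For every real $\beta$, the Laplace–Beltrami operator does not move under the Dirac deformation: $D(t)^2=L$ for all $t\in\mathbb{R}$.
   Context: Let $G$ be a finite simple graph. For $k\ge0$ let $\Omega_k$ be the space of complex-valued functions on the (oriented) $k$-simplices of $G$ (complete subgraphs with $k+1$ vertices), $\Omega=\bigoplus_k\Omega_k$. The exterior derivative $d_0:\Omega_k\to\Omega_{k+1}$ is $(d_0f)(x_0,\dots,x_{k+1})=\sum_{j}(-1)^jf(x_0,\dots,\hat x_j,\dots,x_{k+1})$, $D_0=d_0+d_0^*$ and $L=D_0^2$. For a self-adjoint operator $D$ on $\Omega$ whose blocks $\Omega_k\to\Omega_j$ vanish unless $|j-k|\le1$, write $D=d+d^*+b$ with $d$ the blocks $\Omega_k\to\Omega_{k+1}$ and $b$ the block-diagonal part. The Dirac deformation with real parameter $\beta$ is the solution $D(t)$ of $D'=BD-DB$, $D(0)=D_0$, with $B(t)=d(t)-d(t)^*+i\beta b(t)$, $D(t)=d(t)+d(t)^*+b(t)$ (the solution exists for all real $t$ and keeps this form). *)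

theory Defs
  imports "HOL-Analysis.Analysis"
begin

text \<open>Operators on Omega are represented as matrices indexed by simplices,
  i.e. functions simplex => simplex => complex (row index first).
  The orientation of each simplex is the one induced by the linear order on vertices.
  A k-simplex is a simplex x with card x = k + 1.\<close>

definition simple_graph :: "'a set \<Rightarrow> ('a \<Rightarrow> 'a \<Rightarrow> bool) \<Rightarrow> bool" where
  "simple_graph V E \<longleftrightarrow> finite V \<and> (\<forall>u v. E u v \<longrightarrow> E v u) \<and> (\<forall>v. \<not> E v v)
      \<and> (\<forall>u v. E u v \<longrightarrow> u \<in> V \<and> v \<in> V)"

definition simplices :: "'a set \<Rightarrow> ('a \<Rightarrow> 'a \<Rightarrow> bool) \<Rightarrow> 'a set set" where
  "simplices V E = {x. x \<subseteq> V \<and> x \<noteq> {} \<and> (\<forall>u\<in>x. \<forall>v\<in>x. u \<noteq> v \<longrightarrow> E u v)}"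

type_synonym 'a op = "'a set \<Rightarrow> 'a set \<Rightarrow> complex"

definition mmult :: "'a set set \<Rightarrow> 'a op \<Rightarrow> 'a op \<Rightarrow> 'a op" where
  "mmult S A B = (\<lambda>y x. \<Sum>z\<in>S. A y z * B z x)"

definition madj :: "'a op \<Rightarrow> 'a op" where
  "madj A = (\<lambda>y x. cnj (A x y))"

text \<open>Exterior derivative d_0 : Omega_k -> Omega_(k+1):
  (d_0 f)(y_0,...,y_(k+1)) = sum_j (-1)^j f(y_0,..,hat y_j,..,y_(k+1)), with y_0 < ... < y_(k+1).
  Matrix entry (y,x) is (-1)^j when x = y minus its j-th vertex (0-based, sorted order).\<close>
definition ext_deriv :: "('a::linorder) op" where
  "ext_deriv = (\<lambda>y x. if x \<subseteq> y \<and> card y = card x + 1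
       then (-1) ^ card {w\<in>y. w < the_elem (y - x)} else 0)"

definition Dirac0 :: "('a::linorder) op" where
  "Dirac0 = (\<lambda>y x. ext_deriv y x + madj ext_deriv y x)"

definition Laplacian :: "('a::linorder) set set \<Rightarrow> 'a op" where
  "Laplacian S = mmult S Dirac0 Dirac0"

text \<open>Block parts of an operator D = d + d^* + b: d = blocks Omega_k -> Omega_(k+1),
  b = block diagonal part.\<close>
definition dpart :: "'a op \<Rightarrow> 'a op" where
  "dpart M = (\<lambda>y x. if card y = card x + 1 then M y x else 0)"

definition bpart :: "'a op \<Rightarrow> 'a op" where
  "bpart M = (\<lambda>y x. if card y = card x then M y x else 0)"

definition deform_B :: "real \<Rightarrow> 'a op \<Rightarrow> 'a op" where
  "deform_B \<beta> M = (\<lambda>y x. dpart M y x - madj (dpart M) y x + \<i> * complex_of_real \<beta> * bpart M y x)"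

end

theory Submission
  imports Defs "HOL-Library.Function_Algebras"
begin

text \<open>Write Q = D^2 - L. The Lax equation gives Q' = [B, D^2] = [B, Q] + [B, L]. The Laplacian is
  block diagonal for the grading by dimension, so it commutes with passing to the graded parts
  d, d^*, b of D; hence [B, L] is built from graded parts of [D, L] = [D, D^2 - Q] = -[D, Q].
  Thus Q' is bounded linearly in Q, and Q(0) = 0 forces Q = 0 by Gronwall's inequality.\<close>

section \<open>Matrices indexed by simplices\<close>

definition mcomm :: "'a set set \<Rightarrow> 'a op \<Rightarrow> 'a op \<Rightarrow> 'a op" where
  "mcomm S A B = mmult S A B - mmult S B A"

definition mnorm :: "'a set set \<Rightarrow> 'a op \<Rightarrow> real" where
  "mnorm S A = (\<Sum>y\<in>S. \<Sum>x\<in>S. norm (A y x))"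

definition graded_part :: "(nat \<Rightarrow> nat) \<Rightarrow> 'a op \<Rightarrow> 'a op" where
  "graded_part h M = (\<lambda>y x. if card y = h (card x) then M y x else 0)"

lemma mmult_assoc: "mmult S (mmult S A B) C = mmult S A (mmult S B C)"
proof (intro ext)
  fix y x
  have "mmult S (mmult S A B) C y x = (\<Sum>w\<in>S. \<Sum>z\<in>S. A y z * B z w * C w x)"
    unfolding mmult_def by (simp add: sum_distrib_right)
  also have "\<dots> = (\<Sum>z\<in>S. \<Sum>w\<in>S. A y z * B z w * C w x)" by (rule sum.swap)
  also have "\<dots> = mmult S A (mmult S B C) y x"
    unfolding mmult_def by (simp add: sum_distrib_left mult.assoc)
  finally show "mmult S (mmult S A B) C y x = mmult S A (mmult S B C) y x" .
qed

lemma mmult_diff_left: "mmult S (A - A') C = mmult S A C - mmult S A' C"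
  unfolding mmult_def by (auto simp: fun_eq_iff algebra_simps sum_subtractf)

lemma mmult_diff_right: "mmult S C (A - A') = mmult S C A - mmult S C A'"
  unfolding mmult_def by (auto simp: fun_eq_iff algebra_simps sum_subtractf)

lemma mcomm_diff_right: "mcomm S C (A - A') = mcomm S C A - mcomm S C A'"
  unfolding mcomm_def by (simp add: mmult_diff_left mmult_diff_right)

lemma mcomm_square_self: "mcomm S D (mmult S D D) = 0"
  unfolding mcomm_def by (simp add: mmult_assoc)

lemma mcomm_square_Leibniz:
  "mmult S (mcomm S B D) D + mmult S D (mcomm S B D) = mcomm S B (mmult S D D)"
  unfolding mcomm_def by (simp add: mmult_diff_left mmult_diff_right mmult_assoc)

lemma has_vector_derivative_mmult:
  assumes "\<And>y x. y \<in> S \<Longrightarrow> x \<in> S \<Longrightarrow> ((\<lambda>s. A s y x) has_vector_derivative A' y x) (at t)"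
    and "\<And>y x. y \<in> S \<Longrightarrow> x \<in> S \<Longrightarrow> ((\<lambda>s. C s y x) has_vector_derivative C' y x) (at t)"
    and "y \<in> S" "x \<in> S"
  shows "((\<lambda>s. mmult S (A s) (C s) y x) has_vector_derivative
           (mmult S A' (C t) + mmult S (A t) C') y x) (at t)"
proof -
  have "((\<lambda>s. \<Sum>z\<in>S. A s y z * C s z x) has_vector_derivative
          (\<Sum>z\<in>S. A t y z * C' z x + A' y z * C t z x)) (at t)"
    using assms by (intro has_vector_derivative_sum has_vector_derivative_mult) auto
  then show ?thesis
    unfolding mmult_def by (simp add: sum.distrib add.commute)
qed

lemma norm_entry_le_mnorm:
  assumes "finite S" "y \<in> S" "x \<in> S" shows "norm (A y x) \<le> mnorm S A"
proof -
  have "norm (A y x) \<le> (\<Sum>x\<in>S. norm (A y x))"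
    using assms by (intro member_le_sum) auto
  also have "\<dots> \<le> mnorm S A"
    unfolding mnorm_def using assms
    by (intro member_le_sum[where f = "\<lambda>y. \<Sum>x\<in>S. norm (A y x)"]) (auto intro: sum_nonneg)
  finally show ?thesis .
qed

lemma mnorm_nonneg: "mnorm S A \<ge> 0"
  unfolding mnorm_def by (intro sum_nonneg) auto

lemma norm_mmult_entry_le:
  assumes "finite S" "y \<in> S" "x \<in> S"
  shows "norm (mmult S A B y x) \<le> mnorm S A * mnorm S B"
proof -
  have "norm (mmult S A B y x) \<le> (\<Sum>z\<in>S. norm (A y z) * norm (B z x))"
    unfolding mmult_def by (rule order_trans[OF norm_sum]) (simp add: norm_mult)
  also have "\<dots> \<le> (\<Sum>z\<in>S. mnorm S A * norm (B z x))"
    using assms by (intro sum_mono mult_right_mono norm_entry_le_mnorm) auto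
  also have "\<dots> = mnorm S A * (\<Sum>z\<in>S. norm (B z x))" by (simp add: sum_distrib_left)
  also have "(\<Sum>z\<in>S. norm (B z x)) \<le> mnorm S B"
    unfolding mnorm_def using assms by (intro sum_mono member_le_sum) auto
  finally show ?thesis by (simp add: mnorm_nonneg mult_left_mono)
qed

lemma norm_mcomm_entry_le:
  assumes "finite S" "y \<in> S" "x \<in> S"
  shows "norm (mcomm S A B y x) \<le> 2 * mnorm S A * mnorm S B"
proof -
  have "norm (mcomm S A B y x) \<le> norm (mmult S A B y x) + norm (mmult S B A y x)"
    unfolding mcomm_def by (simp add: norm_triangle_ineq4)
  also have "\<dots> \<le> mnorm S A * mnorm S B + mnorm S B * mnorm S A"
    using assms by (intro add_mono norm_mmult_entry_le) auto
  finally show ?thesis by simp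
qed

lemma mnorm_transpose: "(\<Sum>y\<in>S. \<Sum>x\<in>S. norm (M x y)) = mnorm S M"
  unfolding mnorm_def by (rule sum.swap)

lemma mnorm_deform_B_le: "mnorm S (deform_B \<beta> M) \<le> (2 + \<bar>\<beta>\<bar>) * mnorm S M"
proof -
  have entry: "norm (deform_B \<beta> M y x) \<le> norm (M y x) + norm (M x y) + \<bar>\<beta>\<bar> * norm (M y x)"
    for y x
  proof -
    have "norm (deform_B \<beta> M y x) \<le> norm (dpart M y x) + norm (madj (dpart M) y x)
            + norm (\<i> * complex_of_real \<beta> * bpart M y x)"
      unfolding deform_B_def by (meson add_right_mono norm_triangle_ineq norm_triangle_ineq4 order_trans)
    also have "\<dots> \<le> norm (M y x) + norm (M x y) + \<bar>\<beta>\<bar> * norm (M y x)"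
      unfolding dpart_def madj_def bpart_def by (intro add_mono) (auto simp: norm_mult)
    finally show ?thesis .
  qed
  have "mnorm S (deform_B \<beta> M)
          \<le> (\<Sum>y\<in>S. \<Sum>x\<in>S. norm (M y x) + norm (M x y) + \<bar>\<beta>\<bar> * norm (M y x))"
    unfolding mnorm_def by (intro sum_mono entry)
  also have "\<dots> = mnorm S M + (\<Sum>y\<in>S. \<Sum>x\<in>S. norm (M x y)) + \<bar>\<beta>\<bar> * mnorm S M"
    unfolding mnorm_def by (simp add: sum.distrib sum_distrib_left)
  finally show ?thesis by (simp add: mnorm_transpose algebra_simps)
qed

lemma mnorm_power2_le:
  assumes "finite S"
  shows "(mnorm S A)\<^sup>2 \<le> real (card (S \<times> S)) * (\<Sum>y\<in>S. \<Sum>x\<in>S. (norm (A y x))\<^sup>2)"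
proof -
  have "mnorm S A = (\<Sum>p\<in>S \<times> S. norm (A (fst p) (snd p)) * 1)"
    unfolding mnorm_def by (simp add: sum.cartesian_product case_prod_beta)
  moreover have "(\<Sum>y\<in>S. \<Sum>x\<in>S. (norm (A y x))\<^sup>2) = (\<Sum>p\<in>S \<times> S. (norm (A (fst p) (snd p)))\<^sup>2)"
    by (simp add: sum.cartesian_product case_prod_beta)
  ultimately show ?thesis
    using Cauchy_Schwarz_ineq_sum[of "\<lambda>p. norm (A (fst p) (snd p))" "\<lambda>_. 1" "S \<times> S"]
    by (simp add: mult.commute)
qed

section \<open>A Gronwall argument\<close>

lemma has_real_derivative_norm_power2:
  fixes q :: "real \<Rightarrow> complex"
  assumes "(q has_vector_derivative q') (at t)"
  shows "((\<lambda>s. (norm (q s))\<^sup>2) has_real_derivative 2 * Re (cnj (q t) * q')) (at t)"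
proof -
  have Re: "((\<lambda>s. Re (q s)) has_real_derivative Re q') (at t)"
    and Im: "((\<lambda>s. Im (q s)) has_real_derivative Im q') (at t)"
    using has_vector_derivative_complex_iff[THEN iffD1, OF assms] by auto
  have "((\<lambda>s. (Re (q s))\<^sup>2 + (Im (q s))\<^sup>2) has_real_derivative
               2 * (Re (q t) * Re q' + Im (q t) * Im q')) (at t)"
    using DERIV_add[OF DERIV_power[OF Re, of 2] DERIV_power[OF Im, of 2]] by (simp add: ac_simps)
  then show ?thesis by (simp add: cmod_power2)
qed

lemma abs_Re_cnj_mult_le: "\<bar>Re (cnj a * b)\<bar> \<le> norm a * norm b"
  using abs_Re_le_cmod[of "cnj a * b"] by (simp add: norm_mult)

lemma nonneg_vanishes_if_deriv_le:
  fixes f f' :: "real \<Rightarrow> real"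
  assumes "0 \<le> t" and der: "\<And>s. (f has_real_derivative f' s) (at s)"
    and bound: "\<And>s. 0 \<le> s \<Longrightarrow> s \<le> t \<Longrightarrow> f' s \<le> M * f s"
    and "f 0 = 0" "f t \<ge> 0"
  shows "f t = 0"
proof -
  define g where "g s = f s * exp (- M * s)" for s
  have "g t \<le> g 0"
  proof (rule DERIV_nonpos_imp_nonincreasing[OF \<open>0 \<le> t\<close>])
    fix s assume "0 \<le> s" "s \<le> t"
    have "DERIV g s :> (f' s - M * f s) * exp (- M * s)"
      unfolding g_def by (auto intro!: derivative_eq_intros der simp: algebra_simps)
    moreover have "(f' s - M * f s) * exp (- M * s) \<le> 0"
      using bound[OF \<open>0 \<le> s\<close> \<open>s \<le> t\<close>] by (simp add: mult_le_0_iff)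
    ultimately show "\<exists>y. DERIV g s :> y \<and> y \<le> 0" by blast
  qed
  then have "f t \<le> 0" using \<open>f 0 = 0\<close> unfolding g_def by (simp add: mult_le_0_iff)
  with \<open>f t \<ge> 0\<close> show ?thesis by linarith
qed

lemma Gronwall_vanishes:
  fixes f f' k :: "real \<Rightarrow> real"
  assumes der: "\<And>s. (f has_real_derivative f' s) (at s)" and nonneg: "\<And>s. f s \<ge> 0"
    and "f 0 = 0" and "continuous_on UNIV k" and bound: "\<And>s. \<bar>f' s\<bar> \<le> k s * f s"
  shows "f t = 0"
proof -
  have "bounded (k ` {-\<bar>t\<bar>..\<bar>t\<bar>})"
    using \<open>continuous_on UNIV k\<close>
    by (intro compact_imp_bounded compact_continuous_image) (auto intro: continuous_on_subset)
  then obtain M where M: "\<And>s. \<bar>s\<bar> \<le> \<bar>t\<bar> \<Longrightarrow> \<bar>k s\<bar> \<le> M"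
    unfolding bounded_real by force
  have local_bound: "\<bar>f' s\<bar> \<le> M * f s" if "\<bar>s\<bar> \<le> \<bar>t\<bar>" for s
  proof -
    have "k s * f s \<le> M * f s"
      using M[OF that] nonneg[of s] by (intro mult_right_mono) auto
    with bound[of s] show ?thesis by linarith
  qed
  show ?thesis
  proof (cases "0 \<le> t")
    case True
    have "f' s \<le> M * f s" if "0 \<le> s" "s \<le> t" for s
      using local_bound[of s] that by simp
    then show ?thesis
      using nonneg_vanishes_if_deriv_le[OF True der] \<open>f 0 = 0\<close> nonneg by blast
  next
    case False
    have "((\<lambda>s. f (- s)) has_real_derivative - f' (- s)) (at s)" for s
      using DERIV_chain2[OF der DERIV_minus[OF DERIV_ident]] by simp
    moreover have "- f' (- s) \<le> M * f (- s)" if "0 \<le> s" "s \<le> - t" for s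
      using local_bound[of "- s"] that False by simp
    ultimately have "f (- (- t)) = 0"
      using nonneg_vanishes_if_deriv_le[of "- t" "\<lambda>s. f (- s)" "\<lambda>s. - f' (- s)" M]
        False nonneg \<open>f 0 = 0\<close> by simp
    then show ?thesis by simp
  qed
qed

lemma matrix_vanishes_if_deriv_bounded:
  fixes Q Q' :: "real \<Rightarrow> 'a op" and k :: "real \<Rightarrow> real"
  assumes "finite S"
    and der: "\<And>t y x. y \<in> S \<Longrightarrow> x \<in> S \<Longrightarrow> ((\<lambda>s. Q s y x) has_vector_derivative Q' t y x) (at t)"
    and bound: "\<And>t y x. y \<in> S \<Longrightarrow> x \<in> S \<Longrightarrow> norm (Q' t y x) \<le> k t * mnorm S (Q t)"
    and "continuous_on UNIV k"
    and init: "\<And>y x. y \<in> S \<Longrightarrow> x \<in> S \<Longrightarrow> Q 0 y x = 0"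
    and "y \<in> S" "x \<in> S"
  shows "Q t y x = 0"
proof -
  define n where "n = real (card (S \<times> S))"
  define f where "f t = (\<Sum>y\<in>S. \<Sum>x\<in>S. (norm (Q t y x))\<^sup>2)" for t
  define f' where "f' t = (\<Sum>y\<in>S. \<Sum>x\<in>S. 2 * Re (cnj (Q t y x) * Q' t y x))" for t
  have deriv: "(f has_real_derivative f' t) (at t)" for t
    unfolding f_def f'_def by (intro DERIV_sum has_real_derivative_norm_power2 der)
  have deriv_bound: "\<bar>f' t\<bar> \<le> 2 * n * \<bar>k t\<bar> * f t" for t
  proof -
    have entry: "\<bar>2 * Re (cnj (Q t y x) * Q' t y x)\<bar> \<le> 2 * (norm (Q t y x) * (\<bar>k t\<bar> * mnorm S (Q t)))"
      if "y \<in> S" "x \<in> S" for y x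
    proof -
      have "k t * mnorm S (Q t) \<le> \<bar>k t\<bar> * mnorm S (Q t)"
        by (intro mult_right_mono mnorm_nonneg) simp
      then have "norm (Q t y x) * norm (Q' t y x) \<le> norm (Q t y x) * (\<bar>k t\<bar> * mnorm S (Q t))"
        using bound[OF that, of t] by (intro mult_left_mono) auto
      then show ?thesis
        using abs_Re_cnj_mult_le[of "Q t y x" "Q' t y x"] by simp
    qed
    have "\<bar>f' t\<bar> \<le> (\<Sum>y\<in>S. \<Sum>x\<in>S. 2 * (norm (Q t y x) * (\<bar>k t\<bar> * mnorm S (Q t))))"
      unfolding f'_def
      by (rule order_trans[OF sum_abs], rule sum_mono, rule order_trans[OF sum_abs], rule sum_mono)
        (rule entry)
    also have "\<dots> = 2 * \<bar>k t\<bar> * mnorm S (Q t) * (\<Sum>y\<in>S. \<Sum>x\<in>S. norm (Q t y x))"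
      by (simp add: sum_distrib_left mult_ac)
    also have "\<dots> = 2 * \<bar>k t\<bar> * (mnorm S (Q t))\<^sup>2"
      by (simp add: mnorm_def power2_eq_square)
    also have "\<dots> \<le> 2 * \<bar>k t\<bar> * (n * f t)"
      unfolding n_def f_def using mnorm_power2_le[OF \<open>finite S\<close>] by (intro mult_left_mono) auto
    finally show ?thesis by (simp add: mult_ac)
  qed
  have continuous: "continuous_on UNIV (\<lambda>t. 2 * n * \<bar>k t\<bar>)"
    using \<open>continuous_on UNIV k\<close> by (intro continuous_intros)
  have initial: "f 0 = 0" and nonneg: "f t \<ge> 0" for t
    unfolding f_def using init by (auto intro!: sum_nonneg)
  have "f t = 0"
    using Gronwall_vanishes[OF deriv nonneg initial continuous deriv_bound] .
  then have "(\<Sum>x\<in>S. (norm (Q t y x))\<^sup>2) = 0"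
    unfolding f_def using \<open>finite S\<close> \<open>y \<in> S\<close> by (subst (asm) sum_nonneg_eq_0_iff) (auto intro: sum_nonneg)
  then show ?thesis
    using \<open>finite S\<close> \<open>x \<in> S\<close> by (subst (asm) sum_nonneg_eq_0_iff) auto
qed

section \<open>The Laplacian is block diagonal\<close>

lemma finite_simplices: "simple_graph V E \<Longrightarrow> finite (simplices V E)"
  by (rule finite_subset[of _ "Pow V"]) (auto simp: simple_graph_def simplices_def)

lemma finite_simplex: "simple_graph V E \<Longrightarrow> x \<in> simplices V E \<Longrightarrow> finite x"
  unfolding simple_graph_def simplices_def by (auto intro: finite_subset)

lemma mem_simplices_between:
  "x \<in> simplices V E \<Longrightarrow> y \<in> simplices V E \<Longrightarrow> x \<subseteq> z \<Longrightarrow> z \<subseteq> y \<Longrightarrow> z \<in> simplices V E"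
  unfolding simplices_def mem_Collect_eq by (intro conjI) (meson subset_trans, blast, blast)

lemma ext_deriv_nonzeroD:
  assumes "ext_deriv y x \<noteq> 0" shows "x \<subseteq> y" "card y = card x + 1"
  using assms unfolding ext_deriv_def by (auto split: if_splits)

lemma ext_deriv_insert:
  assumes "finite x" "c \<notin> x"
  shows "ext_deriv (insert c x) x = (-1) ^ card {w\<in>insert c x. w < c}"
proof -
  have "insert c x - x = {c}" using assms by auto
  then show ?thesis unfolding ext_deriv_def using assms by auto
qed

text \<open>Since a < b, removing b from the face containing a counts a among the smaller vertices,
  whereas removing a never counts b: the two paths from insert a (insert b x) down to x differ
  in sign.\<close>
lemma ext_deriv_two_paths_cancel:
  fixes a b :: "'a::linorder"
  assumes "finite x" "a \<notin> x" "b \<notin> x" "a < b"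
  defines "y \<equiv> insert a (insert b x)"
  shows "ext_deriv y (insert a x) * ext_deriv (insert a x) x
         + ext_deriv y (insert b x) * ext_deriv (insert b x) x = 0"
proof -
  define p where "p = card {w\<in>x. w < a}"
  define q where "q = card {w\<in>x. w < b}"
  have smaller: "{w\<in>insert b (insert a x). w < b} = insert a {w\<in>x. w < b}"
    "{w\<in>insert a (insert b x). w < a} = {w\<in>x. w < a}"
    "{w\<in>insert a x. w < a} = {w\<in>x. w < a}" "{w\<in>insert b x. w < b} = {w\<in>x. w < b}"
    using assms by auto
  have "ext_deriv y (insert a x) = (-1) ^ (q + 1)"
    using ext_deriv_insert[of "insert a x" b] assms smaller(1) unfolding y_def q_def
    by (simp add: insert_commute)
  moreover have "ext_deriv y (insert b x) = (-1) ^ p"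
    using ext_deriv_insert[of "insert b x" a] assms smaller(2) unfolding y_def p_def by simp
  moreover have "ext_deriv (insert a x) x = (-1) ^ p" "ext_deriv (insert b x) x = (-1) ^ q"
    using ext_deriv_insert[of x a] ext_deriv_insert[of x b] assms smaller(3,4)
    unfolding p_def q_def by simp_all
  ultimately show ?thesis by (simp add: power_add)
qed

lemma ext_deriv_square_zero:
  assumes G: "simple_graph V E" and y: "y \<in> simplices V E" and x: "x \<in> simplices V E"
  shows "mmult (simplices V E) ext_deriv ext_deriv y x = 0"
proof -
  let ?S = "simplices V E"
  have path: "x \<subseteq> z \<and> z \<subseteq> y \<and> card z = card x + 1 \<and> card y = card z + 1"
    if "ext_deriv y z * ext_deriv z x \<noteq> 0" for z
    using that ext_deriv_nonzeroD[of y z] ext_deriv_nonzeroD[of z x] by auto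
  show ?thesis
  proof (cases "x \<subseteq> y \<and> card y = card x + 2")
    case False
    then have "ext_deriv y z * ext_deriv z x = 0" for z
      using path[of z] by fastforce
    then show ?thesis unfolding mmult_def by (simp add: sum.neutral)
  next
    case True
    have fx: "finite x" and fy: "finite y" using finite_simplex[OF G] x y by auto
    then have "card (y - x) = 2" using True by (simp add: card_Diff_subset)
    then obtain a b where ab: "y - x = {a, b}" "a < b"
      by (metis card_2_iff insert_commute linorder_neqE)
    have y_eq: "y = insert a (insert b x)" using ab True by auto
    have support: "z \<in> {insert a x, insert b x}" if "ext_deriv y z * ext_deriv z x \<noteq> 0" for z
    proof -
      have z: "x \<subseteq> z" "z \<subseteq> y" "card z = card x + 1" using path[OF that] by auto
      then have "card (z - x) = 1"
        using fy by (simp add: card_Diff_subset finite_subset)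
      then obtain c where "z - x = {c}" by (auto simp: card_Suc_eq)
      then have "z = insert c x" "c \<in> {a, b}" using z ab by auto
      then show ?thesis by auto
    qed
    have faces: "{insert a x, insert b x} \<subseteq> ?S"
      using x y True y_eq by (auto intro: mem_simplices_between)
    have "mmult ?S ext_deriv ext_deriv y x
          = (\<Sum>z\<in>{insert a x, insert b x}. ext_deriv y z * ext_deriv z x)"
      unfolding mmult_def using faces support finite_simplices[OF G]
      by (intro sum.mono_neutral_right) auto
    also have "\<dots> = 0"
    proof -
      have "a \<notin> x" "b \<notin> x" "insert a x \<noteq> insert b x" using ab by auto
      then show ?thesis using ext_deriv_two_paths_cancel[OF fx _ _ ab(2)] unfolding y_eq by simp
    qed
    finally show ?thesis .
  qed
qed

lemma Dirac0_hermitian: "Dirac0 x y = cnj (Dirac0 y x)"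
  unfolding Dirac0_def madj_def by simp

lemma Laplacian_hermitian: "Laplacian S y x = cnj (Laplacian S x y)"
  unfolding Laplacian_def mmult_def
  by (simp add: Dirac0_hermitian[of y] Dirac0_hermitian[of _ x] mult.commute)

lemma Laplacian_block_diagonal:
  assumes G: "simple_graph V E" and y: "y \<in> simplices V E" and x: "x \<in> simplices V E"
    and "card y \<noteq> card x"
  shows "Laplacian (simplices V E) y x = 0"
proof -
  let ?S = "simplices V E"
  have "Dirac0 y z * Dirac0 z x = ext_deriv y z * ext_deriv z x + cnj (ext_deriv x z * ext_deriv z y)"
    for z
  proof -
    have a: "ext_deriv y z * cnj (ext_deriv x z) = 0"
      using ext_deriv_nonzeroD[of y z] ext_deriv_nonzeroD[of x z] \<open>card y \<noteq> card x\<close> by fastforce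
    have b: "cnj (ext_deriv z y) * ext_deriv z x = 0"
      using ext_deriv_nonzeroD[of z y] ext_deriv_nonzeroD[of z x] \<open>card y \<noteq> card x\<close> by fastforce
    have "Dirac0 y z * Dirac0 z x = ext_deriv y z * ext_deriv z x
        + ext_deriv y z * cnj (ext_deriv x z) + cnj (ext_deriv z y) * ext_deriv z x
        + cnj (ext_deriv z y) * cnj (ext_deriv x z)"
      unfolding Dirac0_def madj_def by (simp add: algebra_simps)
    also have "\<dots> = ext_deriv y z * ext_deriv z x + cnj (ext_deriv x z * ext_deriv z y)"
      by (simp only: a b) (simp add: mult.commute)
    finally show ?thesis .
  qed
  then have "Laplacian ?S y x = mmult ?S ext_deriv ext_deriv y x + cnj (mmult ?S ext_deriv ext_deriv x y)"
    unfolding Laplacian_def mmult_def by (simp add: sum.distrib)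
  then show ?thesis using ext_deriv_square_zero[OF G] x y by simp
qed

section \<open>Commutators of the deformation with the Laplacian\<close>

lemma mcomm_graded_part_block_diagonal:
  assumes L: "\<And>y x. y \<in> S \<Longrightarrow> x \<in> S \<Longrightarrow> card y \<noteq> card x \<Longrightarrow> L y x = 0"
    and "y \<in> S" "x \<in> S"
  shows "mcomm S (graded_part h M) L y x = (if card y = h (card x) then mcomm S M L y x else 0)"
proof -
  have "mmult S (graded_part h M) L y x = (if card y = h (card x) then mmult S M L y x else 0)"
  proof -
    have "graded_part h M y z * L z x = (if card y = h (card x) then M y z * L z x else 0)"
      if "z \<in> S" for z
      using L[OF that \<open>x \<in> S\<close>] unfolding graded_part_def by (cases "card z = card x") auto
    then show ?thesis unfolding mmult_def by (auto cong: sum.cong)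
  qed
  moreover have "mmult S L (graded_part h M) y x = (if card y = h (card x) then mmult S L M y x else 0)"
  proof -
    have "L y z * graded_part h M z x = (if card y = h (card x) then L y z * M z x else 0)"
      if "z \<in> S" for z
      using L[OF \<open>y \<in> S\<close> that] unfolding graded_part_def by (cases "card y = card z") auto
    then show ?thesis unfolding mmult_def by (auto cong: sum.cong)
  qed
  ultimately show ?thesis unfolding mcomm_def by simp
qed

lemma mcomm_madj_hermitian:
  assumes "\<And>y x. L y x = cnj (L x y)"
  shows "mcomm S (madj A) L y x = - cnj (mcomm S A L x y)"
proof -
  have "mmult S (madj A) L y x = cnj (mmult S L A x y)"
    "mmult S L (madj A) y x = cnj (mmult S A L x y)"
    unfolding mmult_def madj_def by (simp_all add: assms[of _ x] assms[of y] mult.commute)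
  then show ?thesis unfolding mcomm_def by simp
qed

lemma dpart_eq_graded_part: "dpart M = graded_part Suc M"
  unfolding dpart_def graded_part_def by simp

lemma bpart_eq_graded_part: "bpart M = graded_part id M"
  unfolding bpart_def graded_part_def by simp

lemma mcomm_deform_B_left:
  "mcomm S (deform_B \<beta> M) C y x = mcomm S (dpart M) C y x - mcomm S (madj (dpart M)) C y x
     + \<i> * complex_of_real \<beta> * mcomm S (bpart M) C y x"
  unfolding mcomm_def mmult_def deform_B_def
  by (simp add: algebra_simps sum.distrib sum_subtractf sum_distrib_left)

lemma norm_mcomm_deform_B_Laplacian_le:
  assumes G: "simple_graph V E" and y: "y \<in> simplices V E" and x: "x \<in> simplices V E"
  defines "S \<equiv> simplices V E"
  shows "norm (mcomm S (deform_B \<beta> M) (Laplacian S) y x)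
           \<le> (2 + \<bar>\<beta>\<bar>) * (2 * mnorm S M * mnorm S (mmult S M M - Laplacian S))"
proof -
  let ?L = "Laplacian S" and ?K = "2 * mnorm S M * mnorm S (mmult S M M - Laplacian S)"
  have "finite S" unfolding S_def using finite_simplices[OF G] .
  have yS: "y \<in> S" and xS: "x \<in> S" unfolding S_def using y x .
  have block: "\<And>y x. y \<in> S \<Longrightarrow> x \<in> S \<Longrightarrow> card y \<noteq> card x \<Longrightarrow> ?L y x = 0"
    unfolding S_def using Laplacian_block_diagonal[OF G] .
  have "mcomm S M ?L = - mcomm S M (mmult S M M - ?L)"
    using mcomm_diff_right[of S M "mmult S M M" ?L] mcomm_square_self[of S M] by simp
  then have entry: "norm (mcomm S M ?L b a) \<le> ?K" if "b \<in> S" "a \<in> S" for b a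
    using norm_mcomm_entry_le[OF \<open>finite S\<close> that] by simp
  have dpart: "norm (mcomm S (dpart M) ?L b a) \<le> ?K" if "b \<in> S" "a \<in> S" for b a
    using mcomm_graded_part_block_diagonal[OF block that, where h = Suc and M = M] entry[OF that]
    unfolding dpart_eq_graded_part by (simp add: mnorm_nonneg)
  have bpart: "norm (mcomm S (bpart M) ?L y x) \<le> ?K"
    using mcomm_graded_part_block_diagonal[OF block yS xS, where h = id and M = M] entry[OF yS xS]
    unfolding bpart_eq_graded_part by (simp add: mnorm_nonneg)
  have "mcomm S (madj (dpart M)) ?L y x = - cnj (mcomm S (dpart M) ?L x y)"
    by (rule mcomm_madj_hermitian) (rule Laplacian_hermitian)
  then have madj: "norm (mcomm S (madj (dpart M)) ?L y x) \<le> ?K"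
    using dpart[OF xS yS] by simp
  have "norm (mcomm S (deform_B \<beta> M) ?L y x) \<le> norm (mcomm S (dpart M) ?L y x)
     + norm (mcomm S (madj (dpart M)) ?L y x) + \<bar>\<beta>\<bar> * norm (mcomm S (bpart M) ?L y x)"
    unfolding mcomm_deform_B_left
    by (rule order_trans[OF norm_triangle_ineq]) (auto simp: norm_mult intro!: add_mono norm_triangle_ineq4)
  also have "\<dots> \<le> ?K + ?K + \<bar>\<beta>\<bar> * ?K"
    using dpart[OF yS xS] madj bpart by (intro add_mono mult_left_mono) auto
  finally show ?thesis by (simp add: algebra_simps)
qed

lemma norm_mcomm_deform_B_square_le:
  assumes G: "simple_graph V E" and y: "y \<in> simplices V E" and x: "x \<in> simplices V E"
  defines "S \<equiv> simplices V E"
  shows "norm (mcomm S (deform_B \<beta> M) (mmult S M M) y x)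
           \<le> 4 * (2 + \<bar>\<beta>\<bar>) * mnorm S M * mnorm S (mmult S M M - Laplacian S)"
proof -
  let ?B = "deform_B \<beta> M" and ?Q = "mmult S M M - Laplacian S"
  let ?c = "(2 + \<bar>\<beta>\<bar>) * mnorm S M * mnorm S ?Q"
  have "finite S" unfolding S_def using finite_simplices[OF G] .
  have "norm (mcomm S ?B ?Q y x) \<le> 2 * mnorm S ?B * mnorm S ?Q"
    using norm_mcomm_entry_le[OF \<open>finite S\<close>] x y unfolding S_def by blast
  also have "\<dots> \<le> 2 * ((2 + \<bar>\<beta>\<bar>) * mnorm S M) * mnorm S ?Q"
    using mnorm_deform_B_le mnorm_nonneg by (intro mult_right_mono) auto
  finally have "norm (mcomm S ?B ?Q y x) \<le> 2 * ?c" by (simp add: mult_ac)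
  moreover have "norm (mcomm S ?B (Laplacian S) y x) \<le> 2 * ?c"
    using norm_mcomm_deform_B_Laplacian_le[OF G y x, of \<beta> M] unfolding S_def by (simp add: mult_ac)
  moreover have "mcomm S ?B (mmult S M M) = mcomm S ?B ?Q + mcomm S ?B (Laplacian S)"
    by (simp add: mcomm_diff_right)
  ultimately have "norm (mcomm S ?B (mmult S M M) y x) \<le> 4 * ?c"
    using norm_triangle_ineq[of "mcomm S ?B ?Q y x" "mcomm S ?B (Laplacian S) y x"] by simp
  then show ?thesis by (simp only: mult.assoc)
qed

theorem mainTheorem6:
  fixes V :: "'a::linorder set" and E :: "'a \<Rightarrow> 'a \<Rightarrow> bool"
    and \<beta> :: real and D :: "real \<Rightarrow> 'a op"
  assumes G: "simple_graph V E"
    and init: "\<forall>y\<in>simplices V E. \<forall>x\<in>simplices V E. D 0 y x = Dirac0 y x"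
    and ode: "\<forall>t. \<forall>y\<in>simplices V E. \<forall>x\<in>simplices V E.
       ((\<lambda>s. D s y x) has_vector_derivative
          (mmult (simplices V E) (deform_B \<beta> (D t)) (D t) y x
           - mmult (simplices V E) (D t) (deform_B \<beta> (D t)) y x)) (at t)"
  shows "\<forall>t. \<forall>y\<in>simplices V E. \<forall>x\<in>simplices V E.
           mmult (simplices V E) (D t) (D t) y x = Laplacian (simplices V E) y x"
proof (intro allI ballI)
  fix t y x assume "y \<in> simplices V E" "x \<in> simplices V E"
  define S where "S = simplices V E"
  define Q where "Q t = mmult S (D t) (D t) - Laplacian S" for t
  have "finite S" "y \<in> S" "x \<in> S"
    unfolding S_def using finite_simplices[OF G] \<open>y \<in> simplices V E\<close> \<open>x \<in> simplices V E\<close> by auto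
  have D': "((\<lambda>s. D s b a) has_vector_derivative mcomm S (deform_B \<beta> (D t)) (D t) b a) (at t)"
    if "b \<in> S" "a \<in> S" for t b a
    using ode that unfolding S_def mcomm_def by auto
  have Q': "((\<lambda>s. Q s b a) has_vector_derivative mcomm S (deform_B \<beta> (D t)) (mmult S (D t) (D t)) b a) (at t)"
    if "b \<in> S" "a \<in> S" for t b a
    using has_vector_derivative_mmult[where A = D and C = D, OF D' D' that]
    unfolding Q_def mcomm_square_Leibniz by (simp add: has_vector_derivative_diff_const)
  have Q'_bound: "norm (mcomm S (deform_B \<beta> (D t)) (mmult S (D t) (D t)) b a)
                    \<le> 4 * (2 + \<bar>\<beta>\<bar>) * mnorm S (D t) * mnorm S (Q t)"
    if "b \<in> S" "a \<in> S" for t b a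
    using norm_mcomm_deform_B_square_le[OF G] that unfolding S_def Q_def by blast
  have "continuous_on UNIV (\<lambda>t. 4 * (2 + \<bar>\<beta>\<bar>) * mnorm S (D t))"
    using has_vector_derivative_continuous[OF D'] unfolding mnorm_def
    by (intro continuous_at_imp_continuous_on ballI continuous_intros) auto
  moreover have "Q 0 b a = 0" if "b \<in> S" "a \<in> S" for b a
    using init that unfolding Q_def Laplacian_def mmult_def S_def by simp
  ultimately have "Q t y x = 0"
    using matrix_vanishes_if_deriv_bounded[OF \<open>finite S\<close> Q' Q'_bound] \<open>y \<in> S\<close> \<open>x \<in> S\<close> by blast
  then show "mmult (simplices V E) (D t) (D t) y x = Laplacian (simplices V E) y x"
    unfolding Q_def S_def by simp
qed

end
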